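(* Let $n\ge 2$. The number of (unordered) pairs of disjoint matrices from $\Sigma_{n^2}$ is equal to the number of (unordered) pairs of disjoint matrices from $\Pi_n$.
   Context: A binary matrix is a matrix with all entries in $\{0,1\}$. An $n^2\times n^2$ binary matrix $A$ is partitioned into $n^2$ non-intersecting $n\times n$ blocks $A_{kl}$, $1\le k,l\le n$ (so $A=[A_{kl}]$). $A$ is an S-permutation matrix if each row, each column and each block of $A$ contains exactly one $1$; $\Sigma_{n^2}$ is the set of these. Two binary matrices $A=(a_{ij}),B=(b_{ij})$ of the same size are disjoint if there are no $i,j$ with $a_{ij}=b_{ij}=1$. $\Pi_n$ is the set of all $n\times n$ matrices whose entries are ordered pairs $\langle i,j\rangle$ with $i,j\in[n]=\{1,\dots,n\}$, such that in each row the first coordinates form a permutation of $[n]$ and in each column the second coordinates form a permutation of $[n]$. Two matrices $\pi'=[p'_{ij}],\pi''=[p''_{ij}]\in\Pi_n$ are disjoint if $p'_{ij}\ne p''_{ij}$ for all $i,j\in[n]$. *)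

theory Defs
  imports "HOL-Library.FuncSet"
begin

text \<open>A binary n^2 x n^2 matrix is represented by the set of positions of its 1-entries,
  a subset of {0..<n^2} x {0..<n^2} (0-based indices). The block A_kl (0-based k,l < n)
  consists of the positions (i,j) with i div n = k and j div n = l.\<close>

definition S_perm_matrices :: "nat \<Rightarrow> (nat \<times> nat) set set" where
  "S_perm_matrices n = {A. A \<subseteq> {0..<n^2} \<times> {0..<n^2}
     \<and> (\<forall>i<n^2. \<exists>!j. (i, j) \<in> A)
     \<and> (\<forall>j<n^2. \<exists>!i. (i, j) \<in> A)
     \<and> (\<forall>k<n. \<forall>l<n. \<exists>!p. p \<in> A \<and> fst p div n = k \<and> snd p div n = l)}"

definition disjoint_bin :: "(nat \<times> nat) set \<Rightarrow> (nat \<times> nat) set \<Rightarrow> bool" where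
  "disjoint_bin A B \<longleftrightarrow> A \<inter> B = {}"

text \<open>Matrices in Pi_n: n x n matrices (0-based indices) with entries ordered pairs from
  {0..<n}, represented as extensional functions on {0..<n} x {0..<n}.\<close>

definition Pi_matrices :: "nat \<Rightarrow> (nat \<times> nat \<Rightarrow> nat \<times> nat) set" where
  "Pi_matrices n = {p. p \<in> ({0..<n} \<times> {0..<n}) \<rightarrow>\<^sub>E ({0..<n} \<times> {0..<n})
     \<and> (\<forall>i<n. bij_betw (\<lambda>j. fst (p (i, j))) {0..<n} {0..<n})
     \<and> (\<forall>j<n. bij_betw (\<lambda>i. snd (p (i, j))) {0..<n} {0..<n})}"

definition disjoint_Pi :: "nat \<Rightarrow> (nat \<times> nat \<Rightarrow> nat \<times> nat) \<Rightarrow> (nat \<times> nat \<Rightarrow> nat \<times> nat) \<Rightarrow> bool" where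
  "disjoint_Pi n p q \<longleftrightarrow> (\<forall>i<n. \<forall>j<n. p (i, j) \<noteq> q (i, j))"

end

theory Submission
  imports Defs
begin

text \<open>Write an index of an \<open>n\<^sup>2 \<times> n\<^sup>2\<close> matrix as \<open>k n + a\<close> with \<open>a < n\<close>. An S-permutation
  matrix is then the same as an \<open>n \<times> n\<close> matrix \<open>p\<close> of positions: \<open>p (k, l) = (a, b)\<close> says
  that the 1 of block \<open>(k, l)\<close> sits at position \<open>(a, b)\<close> inside the block. The row condition for
  row \<open>k n + a\<close> says that exactly one block in block row \<open>k\<close> has its 1 in inner row \<open>a\<close>, i.e.
  that the first coordinates along row \<open>k\<close> of \<open>p\<close> form a permutation; dually for columns. So
  \<open>p \<mapsto> block_matrix n p\<close> is a bijection from \<open>\<Pi>\<^sub>n\<close> onto the S-permutation matrices, and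
  two matrices are disjoint iff their position matrices are, so the unordered disjoint pairs
  correspond as well.\<close>

lemma card_unordered_pairs_bij_betw:
  assumes bij: "bij_betw f S T"
    and rel: "\<And>a b. a \<in> S \<Longrightarrow> b \<in> S \<Longrightarrow> R a b \<longleftrightarrow> R' (f a) (f b)"
  shows "card {{a, b} | a b. a \<in> S \<and> b \<in> S \<and> R a b}
       = card {{p, q} | p q. p \<in> T \<and> q \<in> T \<and> R' p q}"
proof -
  let ?P = "{{a, b} | a b. a \<in> S \<and> b \<in> S \<and> R a b}"
  let ?P' = "{{p, q} | p q. p \<in> T \<and> q \<in> T \<and> R' p q}"
  have inj: "inj_on f S" and img: "f ` S = T"
    using bij by (auto simp: bij_betw_def)
  have "inj_on f (\<Union> ?P)" by (rule inj_on_subset[OF inj]) auto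
  then have "inj_on ((`) f) ?P" by (rule inj_on_image)
  moreover have "(`) f ` ?P = ?P'"
  proof
    show "(`) f ` ?P \<subseteq> ?P'" using rel img by auto
    show "?P' \<subseteq> (`) f ` ?P"
    proof
      fix X assume "X \<in> ?P'"
      then obtain a b where "a \<in> S" "b \<in> S" "X = {f a, f b}" "R' (f a) (f b)"
        using img by blast
      then show "X \<in> (`) f ` ?P" using rel by blast
    qed
  qed
  ultimately show ?thesis using card_image by fastforce
qed

lemma less_square_iff_div_less: "(i :: nat) < n\<^sup>2 \<longleftrightarrow> i div n < n"
  by (cases "n = 0") (simp_all add: div_less_iff_less_mult power2_eq_square)

lemma all_less_square_iff:
  "(\<forall>i < n\<^sup>2. P (i div n) (i mod n)) \<longleftrightarrow> (\<forall>k < n. \<forall>a < (n :: nat). P k a)"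
proof
  assume "\<forall>i < n\<^sup>2. P (i div n) (i mod n)"
  then show "\<forall>k < n. \<forall>a < n. P k a"
  proof (intro allI impI)
    fix k a assume "k < n" "a < n"
    then have "(k * n + a) div n = k" "(k * n + a) mod n = a" "k * n + a < n\<^sup>2"
      by (simp_all add: less_square_iff_div_less)
    with \<open>\<forall>i < n\<^sup>2. P (i div n) (i mod n)\<close> show "P k a" by metis
  qed
next
  assume "\<forall>k < n. \<forall>a < n. P k a"
  then show "\<forall>i < n\<^sup>2. P (i div n) (i mod n)"
    using less_square_iff_div_less by auto
qed

abbreviation cells :: "nat \<Rightarrow> (nat \<times> nat) set" where
  "cells n \<equiv> {0..<n} \<times> {0..<n}"

text \<open>Here \<open>f\<close> is one row of a position matrix; the left-hand side is the row condition for
  the \<open>n\<close> matrix rows it governs. Columns are handled by applying this to \<open>prod.swap \<circ> f\<close>.\<close>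

lemma ex1_line_iff_bij_betw:
  fixes f :: "nat \<Rightarrow> nat \<times> nat"
  assumes range: "\<And>l. l < n \<Longrightarrow> f l \<in> cells n"
  shows "(\<forall>a < n. \<exists>!j. j < n\<^sup>2 \<and> f (j div n) = (a, j mod n))
     \<longleftrightarrow> bij_betw (\<lambda>l. fst (f l)) {0..<n} {0..<n}"
proof
  assume unique: "\<forall>a < n. \<exists>!j. j < n\<^sup>2 \<and> f (j div n) = (a, j mod n)"
  have hit: "l * n + snd (f l) < n\<^sup>2
      \<and> f ((l * n + snd (f l)) div n) = (fst (f l), (l * n + snd (f l)) mod n)"
    if "l < n" for l
    using range[OF that] that by (auto simp: less_square_iff_div_less)
  show "bij_betw (\<lambda>l. fst (f l)) {0..<n} {0..<n}"
    unfolding bij_betw_def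
  proof
    show "inj_on (\<lambda>l. fst (f l)) {0..<n}"
    proof (rule inj_onI)
      fix l l' assume l: "l \<in> {0..<n}" "l' \<in> {0..<n}" and eq: "fst (f l) = fst (f l')"
      have a: "fst (f l) < n" and b: "snd (f l) < n" "snd (f l') < n"
        using range l by (auto simp: mem_Times_iff)
      have "l * n + snd (f l) = l' * n + snd (f l')"
        using unique a hit[of l] hit[of l'] l eq by auto
      then have "(l * n + snd (f l)) div n = (l' * n + snd (f l')) div n" by simp
      then show "l = l'" using b by simp
    qed
    show "(\<lambda>l. fst (f l)) ` {0..<n} = {0..<n}"
    proof
      show "(\<lambda>l. fst (f l)) ` {0..<n} \<subseteq> {0..<n}" using range by (fastforce simp: mem_Times_iff)
      show "{0..<n} \<subseteq> (\<lambda>l. fst (f l)) ` {0..<n}"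
      proof
        fix a assume "a \<in> {0..<n}"
        then obtain j where "j < n\<^sup>2" "f (j div n) = (a, j mod n)" using unique by auto
        then show "a \<in> (\<lambda>l. fst (f l)) ` {0..<n}"
          by (auto simp: less_square_iff_div_less intro!: image_eqI[of _ _ "j div n"])
      qed
    qed
  qed
next
  assume bij: "bij_betw (\<lambda>l. fst (f l)) {0..<n} {0..<n}"
  show "\<forall>a < n. \<exists>!j. j < n\<^sup>2 \<and> f (j div n) = (a, j mod n)"
  proof (intro allI impI)
    fix a assume "a < n"
    then have "a \<in> (\<lambda>l. fst (f l)) ` {0..<n}"
      using bij_betw_imp_surj_on[OF bij] by simp
    then obtain l where l: "l < n" "fst (f l) = a" by auto
    let ?j = "l * n + snd (f l)"
    have b: "snd (f l) < n" using range[OF l(1)] by (auto simp: mem_Times_iff)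
    show "\<exists>!j. j < n\<^sup>2 \<and> f (j div n) = (a, j mod n)"
    proof (rule ex1I[of _ ?j])
      show "?j < n\<^sup>2 \<and> f (?j div n) = (a, ?j mod n)"
        using l b by (simp add: less_square_iff_div_less prod_eq_iff)
      fix j assume j: "j < n\<^sup>2 \<and> f (j div n) = (a, j mod n)"
      then have "fst (f (j div n)) = fst (f l)" "j div n < n"
        using l by (simp_all add: less_square_iff_div_less)
      then have "j div n = l"
        using l inj_onD[OF bij_betw_imp_inj_on[OF bij]] by simp
      moreover have "j mod n = snd (f l)" using j \<open>j div n = l\<close> by simp
      ultimately show "j = ?j" using div_mult_mod_eq[of j n] by simp
    qed
  qed
qed

lemma PiE_cells_less:
  assumes "p \<in> cells n \<rightarrow>\<^sub>E cells n" "k < n" "l < n"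
  shows "fst (p (k, l)) < n" "snd (p (k, l)) < n"
  using PiE_mem[OF assms(1), of "(k, l)"] assms(2,3) by (auto simp: mem_Times_iff)

definition block_matrix :: "nat \<Rightarrow> (nat \<times> nat \<Rightarrow> nat \<times> nat) \<Rightarrow> (nat \<times> nat) set" where
  "block_matrix n p = {(i, j). i < n\<^sup>2 \<and> j < n\<^sup>2 \<and> p (i div n, j div n) = (i mod n, j mod n)}"

lemma mem_block_matrix [simp]:
  "(i, j) \<in> block_matrix n p \<longleftrightarrow> i < n\<^sup>2 \<and> j < n\<^sup>2 \<and> p (i div n, j div n) = (i mod n, j mod n)"
  by (simp add: block_matrix_def)

lemma block_matrix_subset: "block_matrix n p \<subseteq> {0..<n\<^sup>2} \<times> {0..<n\<^sup>2}"
  by (auto simp: block_matrix_def)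

lemma block_matrix_ex1_in_block:
  assumes p: "p \<in> cells n \<rightarrow>\<^sub>E cells n" and "k < n" "l < n"
  shows "\<exists>!q. q \<in> block_matrix n p \<and> fst q div n = k \<and> snd q div n = l"
proof -
  obtain a b where ab: "p (k, l) = (a, b)" by fastforce
  with PiE_cells_less[OF assms] have "a < n" "b < n" by simp_all
  show ?thesis
  proof (rule ex1I[of _ "(k * n + a, l * n + b)"])
    show "(k * n + a, l * n + b) \<in> block_matrix n p
        \<and> fst (k * n + a, l * n + b) div n = k \<and> snd (k * n + a, l * n + b) div n = l"
      using ab \<open>a < n\<close> \<open>b < n\<close> \<open>k < n\<close> \<open>l < n\<close> by (simp add: less_square_iff_div_less)
    fix q assume q: "q \<in> block_matrix n p \<and> fst q div n = k \<and> snd q div n = l"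
    obtain i j where "q = (i, j)" by fastforce
    with q ab have "i div n = k" "j div n = l" "i mod n = a" "j mod n = b" by auto
    then show "q = (k * n + a, l * n + b)"
      using \<open>q = (i, j)\<close> div_mult_mod_eq[of i n] div_mult_mod_eq[of j n] by simp
  qed
qed

lemma block_matrix_in_S_perm_matrices_iff:
  assumes p: "p \<in> cells n \<rightarrow>\<^sub>E cells n"
  shows "block_matrix n p \<in> S_perm_matrices n \<longleftrightarrow> p \<in> Pi_matrices n"
proof -
  have range: "p (k, l) \<in> cells n" if "k < n" "l < n" for k l
    using PiE_cells_less[OF p that] by (simp add: mem_Times_iff)
  have "(\<forall>i < n\<^sup>2. \<exists>!j. (i, j) \<in> block_matrix n p)
      \<longleftrightarrow> (\<forall>k < n. \<forall>a < n. \<exists>!j. j < n\<^sup>2 \<and> p (k, j div n) = (a, j mod n))"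
    using all_less_square_iff[where P = "\<lambda>k a. \<exists>!j. j < n\<^sup>2 \<and> p (k, j div n) = (a, j mod n)"]
    by simp
  also have "\<dots> \<longleftrightarrow> (\<forall>k < n. bij_betw (\<lambda>l. fst (p (k, l))) {0..<n} {0..<n})"
  proof -
    have "(\<forall>a < n. \<exists>!j. j < n\<^sup>2 \<and> p (k, j div n) = (a, j mod n))
        \<longleftrightarrow> bij_betw (\<lambda>l. fst (p (k, l))) {0..<n} {0..<n}" if "k < n" for k
      using ex1_line_iff_bij_betw[of n "\<lambda>l. p (k, l)"] range that by simp
    then show ?thesis by simp
  qed
  finally have rows: "(\<forall>i < n\<^sup>2. \<exists>!j. (i, j) \<in> block_matrix n p)
      \<longleftrightarrow> (\<forall>k < n. bij_betw (\<lambda>l. fst (p (k, l))) {0..<n} {0..<n})" .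
  have "(\<forall>j < n\<^sup>2. \<exists>!i. (i, j) \<in> block_matrix n p)
      \<longleftrightarrow> (\<forall>l < n. \<forall>b < n. \<exists>!i. i < n\<^sup>2 \<and> prod.swap (p (i div n, l)) = (b, i mod n))"
    using all_less_square_iff[where P = "\<lambda>l b. \<exists>!i. i < n\<^sup>2 \<and> prod.swap (p (i div n, l)) = (b, i mod n)"]
    by (simp add: prod_eq_iff conj_commute)
  also have "\<dots> \<longleftrightarrow> (\<forall>l < n. bij_betw (\<lambda>k. snd (p (k, l))) {0..<n} {0..<n})"
  proof -
    have "(\<forall>b < n. \<exists>!i. i < n\<^sup>2 \<and> prod.swap (p (i div n, l)) = (b, i mod n))
        \<longleftrightarrow> bij_betw (\<lambda>k. snd (p (k, l))) {0..<n} {0..<n}" if "l < n" for l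
      using ex1_line_iff_bij_betw[of n "\<lambda>k. prod.swap (p (k, l))"] range that
      by (simp add: mem_Times_iff)
    then show ?thesis by simp
  qed
  finally have columns: "(\<forall>j < n\<^sup>2. \<exists>!i. (i, j) \<in> block_matrix n p)
      \<longleftrightarrow> (\<forall>l < n. bij_betw (\<lambda>k. snd (p (k, l))) {0..<n} {0..<n})" .
  have blocks: "\<forall>k < n. \<forall>l < n. \<exists>!q. q \<in> block_matrix n p \<and> fst q div n = k \<and> snd q div n = l"
    using block_matrix_ex1_in_block[OF p] by blast
  show ?thesis
    unfolding S_perm_matrices_def Pi_matrices_def mem_Collect_eq rows columns
    using blocks by (simp only: block_matrix_subset p simp_thms) blast
qed

lemma inj_on_block_matrix: "inj_on (block_matrix n) (cells n \<rightarrow>\<^sub>E cells n)"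
proof (rule inj_onI)
  fix p q assume p: "p \<in> cells n \<rightarrow>\<^sub>E cells n" and q: "q \<in> cells n \<rightarrow>\<^sub>E cells n"
    and eq: "block_matrix n p = block_matrix n q"
  show "p = q"
  proof (rule PiE_ext[OF p q])
    fix x assume "x \<in> cells n"
    then obtain k l where x: "x = (k, l)" "k < n" "l < n" by auto
    obtain a b where ab: "p (k, l) = (a, b)" by fastforce
    with PiE_cells_less[OF p x(2,3)] have "a < n" "b < n" by simp_all
    with ab x have "(k * n + a, l * n + b) \<in> block_matrix n p"
      by (simp add: less_square_iff_div_less)
    with eq \<open>a < n\<close> \<open>b < n\<close> have "q (k, l) = (a, b)" by simp
    with ab x show "p x = q x" by simp
  qed
qed

lemma block_matrix_disjoint_iff:
  assumes p: "p \<in> cells n \<rightarrow>\<^sub>E cells n" and q: "q \<in> cells n \<rightarrow>\<^sub>E cells n"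
  shows "disjoint_bin (block_matrix n p) (block_matrix n q) \<longleftrightarrow> disjoint_Pi n p q"
  unfolding disjoint_bin_def disjoint_Pi_def
proof
  assume empty: "block_matrix n p \<inter> block_matrix n q = {}"
  show "\<forall>k < n. \<forall>l < n. p (k, l) \<noteq> q (k, l)"
  proof (intro allI impI notI)
    fix k l assume kl: "k < n" "l < n" and eq: "p (k, l) = q (k, l)"
    obtain a b where ab: "p (k, l) = (a, b)" by fastforce
    with PiE_cells_less[OF p kl] have "a < n" "b < n" by simp_all
    with ab eq kl have "(k * n + a, l * n + b) \<in> block_matrix n p \<inter> block_matrix n q"
      by (simp add: less_square_iff_div_less)
    with empty show False by blast
  qed
next
  assume distinct: "\<forall>k < n. \<forall>l < n. p (k, l) \<noteq> q (k, l)"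
  show "block_matrix n p \<inter> block_matrix n q = {}"
  proof (rule equals0I)
    fix x assume "x \<in> block_matrix n p \<inter> block_matrix n q"
    moreover obtain i j where "x = (i, j)" by fastforce
    ultimately have "i div n < n" "j div n < n" "p (i div n, j div n) = q (i div n, j div n)"
      by (auto simp: less_square_iff_div_less)
    with distinct show False by blast
  qed
qed

lemma ex_block_matrix_eq:
  assumes sub: "A \<subseteq> {0..<n\<^sup>2} \<times> {0..<n\<^sup>2}"
    and block: "\<And>k l. k < n \<Longrightarrow> l < n \<Longrightarrow> \<exists>!q. q \<in> A \<and> fst q div n = k \<and> snd q div n = l"
  shows "\<exists>p \<in> cells n \<rightarrow>\<^sub>E cells n. block_matrix n p = A"
proof -
  define t where "t k l = (THE q. q \<in> A \<and> fst q div n = k \<and> snd q div n = l)" for k l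
  have t: "t k l \<in> A \<and> fst (t k l) div n = k \<and> snd (t k l) div n = l" if "k < n" "l < n" for k l
    unfolding t_def by (rule theI'[OF block[OF that]])
  have t_unique: "t k l = q" if "k < n" "l < n" "q \<in> A" "fst q div n = k" "snd q div n = l" for k l q
    unfolding t_def by (rule the1_equality[OF block[OF that(1,2)]]) (use that in blast)
  define p where "p = restrict (\<lambda>(k, l). (fst (t k l) mod n, snd (t k l) mod n)) (cells n)"
  have p: "p \<in> cells n \<rightarrow>\<^sub>E cells n"
    unfolding p_def by auto
  have "(i, j) \<in> block_matrix n p \<longleftrightarrow> (i, j) \<in> A" for i j
  proof
    assume ij: "(i, j) \<in> block_matrix n p"
    then have kl: "i div n < n" "j div n < n" by (auto simp: less_square_iff_div_less)
    let ?q = "t (i div n) (j div n)"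
    from ij kl have "fst ?q mod n = i mod n" "snd ?q mod n = j mod n"
      by (auto simp: p_def)
    with t[OF kl] have "?q = (i, j)"
      by (metis div_mult_mod_eq prod.collapse fst_conv snd_conv)
    with t[OF kl] show "(i, j) \<in> A" by simp
  next
    assume ij: "(i, j) \<in> A"
    with sub have "i < n\<^sup>2" "j < n\<^sup>2" by auto
    then have kl: "i div n < n" "j div n < n" by (simp_all add: less_square_iff_div_less)
    with ij have "t (i div n) (j div n) = (i, j)" by (simp add: t_unique)
    with kl \<open>i < n\<^sup>2\<close> \<open>j < n\<^sup>2\<close> show "(i, j) \<in> block_matrix n p" by (simp add: p_def)
  qed
  then have "block_matrix n p = A" by auto
  with p show ?thesis by blast
qed

lemma bij_betw_block_matrix: "bij_betw (block_matrix n) (Pi_matrices n) (S_perm_matrices n)"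
  unfolding bij_betw_def
proof
  have Pi_sub: "Pi_matrices n \<subseteq> cells n \<rightarrow>\<^sub>E cells n"
    by (auto simp: Pi_matrices_def)
  show "inj_on (block_matrix n) (Pi_matrices n)"
    by (rule inj_on_subset[OF inj_on_block_matrix Pi_sub])
  show "block_matrix n ` Pi_matrices n = S_perm_matrices n"
  proof
    show "block_matrix n ` Pi_matrices n \<subseteq> S_perm_matrices n"
      using Pi_sub block_matrix_in_S_perm_matrices_iff by blast
    show "S_perm_matrices n \<subseteq> block_matrix n ` Pi_matrices n"
    proof
      fix A assume A: "A \<in> S_perm_matrices n"
      then obtain p where p: "p \<in> cells n \<rightarrow>\<^sub>E cells n" "block_matrix n p = A"
        using ex_block_matrix_eq[of A n] by (auto simp: S_perm_matrices_def)
      with A have "p \<in> Pi_matrices n" using block_matrix_in_S_perm_matrices_iff by blast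
      with p show "A \<in> block_matrix n ` Pi_matrices n" by blast
    qed
  qed
qed

theorem mainTheorem2:
  fixes n :: nat
  assumes "n \<ge> 2"
  shows "card {{A, B} | A B. A \<in> S_perm_matrices n \<and> B \<in> S_perm_matrices n \<and> disjoint_bin A B}
       = card {{p, q} | p q. p \<in> Pi_matrices n \<and> q \<in> Pi_matrices n \<and> disjoint_Pi n p q}"
proof -
  have "disjoint_Pi n p q \<longleftrightarrow> disjoint_bin (block_matrix n p) (block_matrix n q)"
    if "p \<in> Pi_matrices n" "q \<in> Pi_matrices n" for p q
    using that block_matrix_disjoint_iff by (auto simp: Pi_matrices_def)
  with card_unordered_pairs_bij_betw[OF bij_betw_block_matrix, where R = "disjoint_Pi n" and R' = disjoint_bin]
  show ?thesis by simp
qed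

end
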